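(* Let $X \to Y$ be a relative cell complex in $\mathbf{PsTop}$. Then every compact subset $C$ of $Y$ intersects the interiors of only finitely many cells of $Y - X$.
   Context: A convergence space is a set with a relation between filters and points ($\lambda\to x$) such that $\lambda\to x$, $\lambda\subseteq\lambda'$ imply $\lambda'\to x$, and $\dot x\to x$; it is pseudotopological iff $\lambda\to x$ exactly when every ultrafilter containing $\lambda$ converges to $x$. Continuous maps: $\lambda\to x$ implies $f(\lambda)\to f(x)$. $\mathbf{PsTop}$ is the category of pseudotopological spaces; topological spaces (in particular $D^n$, $S^{n-1}$) are regarded as pseudotopological by $\lambda\to x$ iff $\lambda$ contains the neighbourhood filter of $x$; subspaces carry the induced structure ($\lambda\to x$ in $U$ iff the filter generated in $X$ converges to $x$), and colimits carry final structures in $\mathbf{PsTop}$. A subset is compact iff, with its subspace structure, every ultrafilter on it converges. $Y$ is obtained from $X$ by attaching a cell if $X$ is a subspace of $Y$ and there is a pushout square in $\mathbf{PsTop}$ with $S^{n-1}\to X$, $S^{n-1}\hookrightarrow D^n$, $D^n \to Y$, $X \to Y$, for some $n\geq 0$ ($S^{-1}=\emptyset$, $D^0$ a point). A continuous map $f : X \to Y$ is a relative cell complex if it is an inclusion and $Y$ is constructed from $X$ by a (possibly transfinite) sequence of cell attachments (with colimits at limit stages). The interior of a cell is the image of $D^n\setminus S^{n-1}$ in $Y$; the cells of $Y - X$ are those attached in this construction. *)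

theory Defs
  imports "HOL-Analysis.Analysis"
begin

text \<open>Convergence spaces are represented on a carrier set inside an ambient type:
  a pair (S, c) where c F x means "the (proper) filter F on S converges to x".
  Filters are HOL filters on the ambient type; "F is a filter on S" means S is in F.
  "lambda subset of lambda'" (as sets of sets) is written F' <= F in HOL's filter order.\<close>

type_synonym 'a cspace = "'a set \<times> ('a filter \<Rightarrow> 'a \<Rightarrow> bool)"

definition pts :: "'a cspace \<Rightarrow> 'a set" where "pts X = fst X"
definition cv :: "'a cspace \<Rightarrow> 'a filter \<Rightarrow> 'a \<Rightarrow> bool" where "cv X = snd X"

definition is_ultrafilter :: "'a filter \<Rightarrow> bool" where
  "is_ultrafilter U \<longleftrightarrow> U \<noteq> bot \<and>
     (\<forall>A. eventually (\<lambda>x. x \<in> A) U \<or> eventually (\<lambda>x. x \<notin> A) U)"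

definition conv_space :: "'a cspace \<Rightarrow> bool" where
  "conv_space X \<longleftrightarrow>
     (\<forall>F x. cv X F x \<longrightarrow> x \<in> pts X \<and> F \<noteq> bot \<and> eventually (\<lambda>z. z \<in> pts X) F) \<and>
     (\<forall>F G x. cv X F x \<and> G \<le> F \<and> G \<noteq> bot \<longrightarrow> cv X G x) \<and>
     (\<forall>x \<in> pts X. cv X (principal {x}) x)"

definition pseudotop :: "'a cspace \<Rightarrow> bool" where
  "pseudotop X \<longleftrightarrow> conv_space X \<and>
     (\<forall>F x. x \<in> pts X \<and> F \<noteq> bot \<and> eventually (\<lambda>z. z \<in> pts X) F \<longrightarrow>
        (cv X F x \<longleftrightarrow> (\<forall>U. is_ultrafilter U \<and> U \<le> F \<longrightarrow> cv X U x)))"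

definition cont :: "'a cspace \<Rightarrow> 'b cspace \<Rightarrow> ('a \<Rightarrow> 'b) \<Rightarrow> bool" where
  "cont X Y f \<longleftrightarrow> f ` pts X \<subseteq> pts Y \<and>
     (\<forall>F x. cv X F x \<longrightarrow> cv Y (filtermap f F) (f x))"

definition top_cspace :: "'a topology \<Rightarrow> 'a cspace" where
  "top_cspace T = (topspace T, \<lambda>F x. x \<in> topspace T \<and> F \<noteq> bot \<and>
      eventually (\<lambda>z. z \<in> topspace T) F \<and>
      (\<forall>U. openin T U \<and> x \<in> U \<longrightarrow> eventually (\<lambda>z. z \<in> U) F))"

text \<open>Euclidean n-disc and (n-1)-sphere, as subsets of finitely supported real
  sequences (coordinates \<ge> n vanish), with the Euclidean (= product) topology.
  For n = 0 the disc is a point and the sphere is empty.\<close>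
definition disc :: "nat \<Rightarrow> (nat \<Rightarrow> real) set" where
  "disc n = {x. (\<forall>i\<ge>n. x i = 0) \<and> (\<Sum>i<n. (x i)\<^sup>2) \<le> 1}"

definition bsphere :: "nat \<Rightarrow> (nat \<Rightarrow> real) set" where
  "bsphere n = {x. (\<forall>i\<ge>n. x i = 0) \<and> (\<Sum>i<n. (x i)\<^sup>2) = 1}"

definition Disc :: "nat \<Rightarrow> (nat \<Rightarrow> real) cspace" where
  "Disc n = top_cspace (top_of_set (disc n))"

definition Sphere :: "nat \<Rightarrow> (nat \<Rightarrow> real) cspace" where
  "Sphere n = top_cspace (top_of_set (bsphere n))"

definition subspace :: "'a cspace \<Rightarrow> 'a cspace \<Rightarrow> bool" where
  "subspace X Y \<longleftrightarrow> pts X \<subseteq> pts Y \<and>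
     (\<forall>F x. cv X F x \<longleftrightarrow> x \<in> pts X \<and> eventually (\<lambda>z. z \<in> pts X) F \<and> cv Y F x)"

text \<open>Final pseudotopological structure on T generated by a relation P, where
  P G y holds iff G is the image of a filter converging (in some source) to a
  point with image y.  This is the pseudotopological modification of the final
  convergence structure.\<close>
definition final_ps :: "'a set \<Rightarrow> ('a filter \<Rightarrow> 'a \<Rightarrow> bool) \<Rightarrow> 'a filter \<Rightarrow> 'a \<Rightarrow> bool" where
  "final_ps T P = (\<lambda>F y. y \<in> T \<and> F \<noteq> bot \<and> eventually (\<lambda>z. z \<in> T) F \<and>
     (\<forall>U. is_ultrafilter U \<and> U \<le> F \<longrightarrow> U = principal {y} \<or> (\<exists>G. P G y \<and> U \<le> G)))"

text \<open>Y is obtained from X by attaching an n-cell with attaching map phi and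
  characteristic map Phi: X is a subspace of Y and the square
  S^(n-1) -> X, S^(n-1) -> D^n, D^n -> Y, X -> Y is a pushout in PsTop, i.e.
  it commutes, the induced map from X + (D^n - S^(n-1)) to Y is bijective, and
  Y carries the final pseudotopological structure w.r.t. X -> Y and Phi.\<close>
definition attach_cell :: "'a cspace \<Rightarrow> 'a cspace \<Rightarrow> nat \<Rightarrow>
    ((nat \<Rightarrow> real) \<Rightarrow> 'a) \<Rightarrow> ((nat \<Rightarrow> real) \<Rightarrow> 'a) \<Rightarrow> bool" where
  "attach_cell X Y n phi Phi \<longleftrightarrow>
     pseudotop X \<and> pseudotop Y \<and> subspace X Y \<and>
     cont (Sphere n) X phi \<and> cont (Disc n) Y Phi \<and>
     (\<forall>s \<in> bsphere n. Phi s = phi s) \<and>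
     pts Y = pts X \<union> Phi ` disc n \<and>
     inj_on Phi (disc n - bsphere n) \<and>
     Phi ` (disc n - bsphere n) \<inter> pts X = {} \<and>
     cv Y = final_ps (pts Y)
       (\<lambda>G y. (\<exists>x. cv X G x \<and> y = x) \<or>
              (\<exists>H d. cv (Disc n) H d \<and> y = Phi d \<and> G = filtermap Phi H))"

definition is_succ_of :: "'i::wellorder \<Rightarrow> 'i \<Rightarrow> bool" where
  "is_succ_of a b \<longleftrightarrow> b < a \<and> \<not> (\<exists>d. b < d \<and> d < a)"

definition is_limit :: "'i::wellorder \<Rightarrow> bool" where
  "is_limit a \<longleftrightarrow> (\<exists>b. b < a) \<and> (\<forall>b<a. \<exists>d. b < d \<and> d < a)"

text \<open>Relative cell complex X -> Y: X is a subspace of Y, and there is a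
  transfinite sequence of spaces Ysp a (a <= g, in a well-ordered index type),
  starting at X and ending at Y, where stage succ(b) is obtained from stage b by
  attaching the cell (n b, phi b, Phi b), and limit stages are colimits
  (union with final structure w.r.t. the inclusions).\<close>
definition rel_cell_complex :: "'a cspace \<Rightarrow> 'a cspace \<Rightarrow> 'i::wellorder \<Rightarrow>
    ('i \<Rightarrow> 'a cspace) \<Rightarrow> ('i \<Rightarrow> nat) \<Rightarrow> ('i \<Rightarrow> (nat \<Rightarrow> real) \<Rightarrow> 'a) \<Rightarrow>
    ('i \<Rightarrow> (nat \<Rightarrow> real) \<Rightarrow> 'a) \<Rightarrow> bool" where
  "rel_cell_complex X Y g Ysp n phi Phi \<longleftrightarrow>
     pseudotop X \<and> pseudotop Y \<and> subspace X Y \<and>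
     Ysp g = Y \<and>
     (\<forall>a\<le>g. \<not> (\<exists>b. b < a) \<longrightarrow> Ysp a = X) \<and>
     (\<forall>a\<le>g. \<forall>b. is_succ_of a b \<longrightarrow> attach_cell (Ysp b) (Ysp a) (n b) (phi b) (Phi b)) \<and>
     (\<forall>a\<le>g. is_limit a \<longrightarrow>
        pts (Ysp a) = (\<Union>b\<in>{..<a}. pts (Ysp b)) \<and>
        cv (Ysp a) = final_ps (pts (Ysp a)) (\<lambda>G y. \<exists>b<a. cv (Ysp b) G y))"

definition cell_interior :: "nat \<Rightarrow> ((nat \<Rightarrow> real) \<Rightarrow> 'a) \<Rightarrow> 'a set" where
  "cell_interior n Phi = Phi ` (disc n - bsphere n)"

definition compact_sub :: "'a cspace \<Rightarrow> 'a set \<Rightarrow> bool" where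
  "compact_sub Y C \<longleftrightarrow> C \<subseteq> pts Y \<and>
     (\<forall>U. is_ultrafilter U \<and> eventually (\<lambda>z. z \<in> C) U \<longrightarrow> (\<exists>x\<in>C. cv Y U x))"

end

theory Submission
  imports Defs
begin

text \<open>Suppose infinitely many cells meet \<open>C\<close>. Choosing a point of \<open>C\<close> in each such cell interior
  gives an infinite set \<open>S\<close> that misses \<open>X\<close> and meets every cell interior in at most one point,
  and by compactness a free ultrafilter \<open>U\<close> on \<open>S\<close> converges in \<open>Y\<close>. Transfinite induction
  along the construction shows that \<open>U\<close> converges at no stage: not in \<open>X\<close>, which \<open>S\<close> misses;
  not at a limit stage, where a convergent free ultrafilter refines a filter converging at an
  earlier stage; and not after attaching a cell. In the last case \<open>U\<close> avoids the single point
  of \<open>S\<close> in the new open cell, so it lives in the previous stage; a filter on the disc whose image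
  is refined by \<open>U\<close> must then concentrate near the sphere, so \<open>U\<close> is the image under the
  attaching map of a filter converging on the sphere and would already converge in the
  previous stage.\<close>

lemma is_ultrafilter_neq_bot: "is_ultrafilter U \<Longrightarrow> U \<noteq> bot"
  unfolding is_ultrafilter_def by blast

lemma is_ultrafilter_le_imp_eq:
  assumes U: "is_ultrafilter U" and "G \<le> U" and "G \<noteq> bot"
  shows "G = U"
proof (rule antisym[OF \<open>G \<le> U\<close>], rule filter_leI)
  fix P assume "eventually P G"
  show "eventually P U"
  proof (rule ccontr)
    assume "\<not> eventually P U"
    moreover have "eventually (\<lambda>x. x \<in> Collect P) U \<or> eventually (\<lambda>x. x \<notin> Collect P) U"
      using U unfolding is_ultrafilter_def by blast
    ultimately have "eventually (\<lambda>x. \<not> P x) U"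
      by simp
    with \<open>G \<le> U\<close> have "eventually (\<lambda>x. \<not> P x) G"
      by (rule filter_leD)
    with \<open>eventually P G\<close> have "eventually (\<lambda>_. False) G"
      by (rule eventually_elim2) simp
    with \<open>G \<noteq> bot\<close> show False
      by simp
  qed
qed

lemma maximal_filter_is_ultrafilter:
  assumes "U \<noteq> bot" and maximal: "\<And>G. G \<noteq> bot \<Longrightarrow> G \<le> U \<Longrightarrow> G = U"
  shows "is_ultrafilter U"
  unfolding is_ultrafilter_def
proof (intro conjI allI \<open>U \<noteq> bot\<close> disjCI)
  fix A assume "\<not> eventually (\<lambda>x. x \<notin> A) U"
  then have "inf U (principal A) \<noteq> bot"
    by (simp add: trivial_limit_def eventually_inf_principal)
  then have "inf U (principal A) = U"
    by (rule maximal) simp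
  moreover have "eventually (\<lambda>x. x \<in> A) (inf U (principal A))"
    by (simp add: eventually_inf_principal)
  ultimately show "eventually (\<lambda>x. x \<in> A) U"
    by simp
qed

lemma ultrafilter_exists:
  assumes "F \<noteq> bot"
  obtains U where "is_ultrafilter U" "U \<le> F"
proof -
  let ?A = "{G. G \<noteq> bot \<and> G \<le> F}"
  have "\<exists>M\<in>?A. \<forall>G\<in>?A. G \<le> M \<longrightarrow> G = M"
  proof (rule predicate_Zorn)
    show "partial_order_on ?A (relation_of (\<lambda>M G. G \<le> M) ?A)"
      by (rule partial_order_on_relation_ofI) auto
  next
    fix C assume "C \<in> Chains (relation_of (\<lambda>M G. G \<le> M) ?A)"
    then have CA: "C \<subseteq> ?A" and comparable: "\<And>G H. G \<in> C \<Longrightarrow> H \<in> C \<Longrightarrow> G \<le> H \<or> H \<le> G"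
      unfolding Chains_def relation_of_def by fast+
    show "\<exists>L\<in>?A. \<forall>G\<in>C. L \<le> G"
    proof (cases "C = {}")
      case True
      with assms show ?thesis by auto
    next
      case False
      have "eventually P (Inf C) \<longleftrightarrow> (\<exists>G\<in>C. eventually P G)" for P
        by (rule eventually_Inf_base[OF False]) (use comparable in \<open>blast intro: le_infI\<close>)
      then have "Inf C \<noteq> bot"
        using CA by (auto simp: trivial_limit_def)
      moreover have "Inf C \<le> F"
        using False CA by (auto intro: Inf_lower2)
      ultimately show ?thesis
        by (auto intro: Inf_lower)
    qed
  qed
  then obtain U where U: "U \<noteq> bot" "U \<le> F" and maximal_in_A: "\<forall>G\<in>?A. G \<le> U \<longrightarrow> G = U"
    by blast
  have maximal: "G = U" if "G \<noteq> bot" "G \<le> U" for G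
  proof -
    have "G \<in> ?A"
      using that U(2) by (auto intro: order_trans)
    with maximal_in_A \<open>G \<le> U\<close> show ?thesis
      by blast
  qed
  have "is_ultrafilter U"
    using U(1) maximal by (rule maximal_filter_is_ultrafilter)
  then show thesis
    using U(2) by (rule that)
qed

lemma free_ultrafilter_exists:
  assumes "infinite S"
  obtains U where "is_ultrafilter U" "U \<le> cofinite" "eventually (\<lambda>x. x \<in> S) U"
proof -
  have "inf cofinite (principal S) \<noteq> bot"
    using assms by (simp add: trivial_limit_def eventually_inf_principal eventually_cofinite)
  then obtain U where "is_ultrafilter U" "U \<le> inf cofinite (principal S)"
    by (rule ultrafilter_exists)
  then show thesis
    by (intro that) (auto simp: le_principal)
qed

lemma principal_singleton_not_le_cofinite: "\<not> principal {x} \<le> cofinite"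
proof
  assume "principal {x} \<le> cofinite"
  moreover have "eventually (\<lambda>z. z \<noteq> x) cofinite"
    by (simp add: eventually_cofinite)
  ultimately have "eventually (\<lambda>z. z \<noteq> x) (principal {x})"
    by (rule filter_leD)
  then show False
    by (simp add: eventually_principal)
qed

lemma ultrafilter_le_filtermap:
  assumes U: "is_ultrafilter U" and UF: "U \<le> filtermap f F"
  obtains V where "V \<noteq> bot" "V \<le> F" "filtermap f V = U"
proof -
  define V where "V = inf F (filtercomap f U)"
  have "V \<noteq> bot"
  proof
    assume "V = bot"
    then obtain P Q where P: "eventually P F" and Q: "eventually Q U" and PQ: "\<And>x. P x \<Longrightarrow> Q (f x) \<Longrightarrow> False"
      unfolding V_def trivial_limit_def eventually_inf eventually_filtercomap by blast
    from P have "eventually (\<lambda>y. \<exists>x. P x \<and> f x = y) (filtermap f F)"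
      by (auto simp: eventually_filtermap elim: eventually_mono)
    with UF have "eventually (\<lambda>y. \<exists>x. P x \<and> f x = y) U"
      by (rule filter_leD)
    with Q have "eventually (\<lambda>_. False) U"
      by (rule eventually_elim2) (use PQ in blast)
    with is_ultrafilter_neq_bot[OF U] show False
      by simp
  qed
  have "filtermap f V \<le> U"
    unfolding V_def using filtermap_mono[OF inf_le2] filtermap_filtercomap by (rule order_trans)
  moreover have "filtermap f V \<noteq> bot"
    using \<open>V \<noteq> bot\<close> by (simp add: filtermap_bot_iff)
  ultimately have "filtermap f V = U"
    by (rule is_ultrafilter_le_imp_eq[OF U])
  with \<open>V \<noteq> bot\<close> show thesis
    by (intro that) (simp_all add: V_def)
qed

lemma cv_top_of_set:
  "cv (top_cspace (top_of_set S)) F x \<longleftrightarrow> x \<in> S \<and> F \<noteq> bot \<and> F \<le> inf (nhds x) (principal S)"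
proof -
  have "(\<forall>W. openin (top_of_set S) W \<and> x \<in> W \<longrightarrow> eventually (\<lambda>z. z \<in> W) F) \<longleftrightarrow>
        (\<forall>T. open T \<and> x \<in> T \<longrightarrow> eventually (\<lambda>z. z \<in> T) F)"
    if "x \<in> S" "eventually (\<lambda>z. z \<in> S) F"
  proof (intro iffI allI impI)
    fix T assume "\<forall>W. openin (top_of_set S) W \<and> x \<in> W \<longrightarrow> eventually (\<lambda>z. z \<in> W) F"
      and "open T \<and> x \<in> T"
    moreover have "openin (top_of_set S) (S \<inter> T) \<and> x \<in> S \<inter> T"
      using that \<open>open T \<and> x \<in> T\<close> by (auto simp: openin_open)
    ultimately have "eventually (\<lambda>z. z \<in> S \<inter> T) F"
      by blast
    then show "eventually (\<lambda>z. z \<in> T) F"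
      by (rule eventually_mono) simp
  next
    fix W assume "\<forall>T. open T \<and> x \<in> T \<longrightarrow> eventually (\<lambda>z. z \<in> T) F"
      and "openin (top_of_set S) W \<and> x \<in> W"
    with that show "eventually (\<lambda>z. z \<in> W) F"
      by (auto simp: openin_open eventually_conj_iff)
  qed
  then show ?thesis
    unfolding cv_def top_cspace_def by (auto simp: le_principal le_nhds)
qed

lemma closed_bsphere: "closed (bsphere n)"
proof -
  have "bsphere n = (\<Inter>i\<in>{n..}. {x. x i = 0}) \<inter> {x. (\<Sum>i<n. (x i)\<^sup>2) = 1}"
    unfolding bsphere_def by auto
  moreover have "continuous_on UNIV (\<lambda>x::nat \<Rightarrow> real. x i)" for i
    by simp
  ultimately show ?thesis
    by (auto intro!: closed_Int closed_INT closed_Collect_eq continuous_intros)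
qed

lemma pseudotop_cv_eventually_pts: "pseudotop Z \<Longrightarrow> cv Z F x \<Longrightarrow> eventually (\<lambda>z. z \<in> pts Z) F"
  unfolding pseudotop_def conv_space_def by blast

lemma pseudotop_cv_mono: "pseudotop Z \<Longrightarrow> cv Z F x \<Longrightarrow> G \<le> F \<Longrightarrow> G \<noteq> bot \<Longrightarrow> cv Z G x"
  unfolding pseudotop_def conv_space_def by blast

lemma final_ps_free_ultrafilter:
  assumes "cv A = final_ps T P" and "cv A U x" and "is_ultrafilter U" and "U \<le> cofinite"
  shows "\<exists>G. P G x \<and> U \<le> G"
  using assms principal_singleton_not_le_cofinite unfolding final_ps_def by fastforce

lemma attach_cell_new_points:
  assumes "attach_cell B A m ph Ph"
  shows "pts A - pts B \<subseteq> cell_interior m Ph"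
proof -
  from assms have "ph ` bsphere m \<subseteq> pts B" and "\<forall>s\<in>bsphere m. Ph s = ph s"
    and "pts A = pts B \<union> Ph ` disc m"
    unfolding attach_cell_def cont_def by (auto simp: Sphere_def top_cspace_def pts_def)
  then show ?thesis
    unfolding cell_interior_def by auto
qed

lemma attach_cell_image_filter_on_sphere:
  assumes att: "attach_cell B A m ph Ph" and H_disc: "eventually (\<lambda>x. x \<in> disc m) H"
    and UB: "eventually (\<lambda>z. z \<in> pts B) U" and UH: "U \<le> filtermap Ph H"
  shows "U \<le> filtermap Ph (inf H (principal (bsphere m)))"
proof (rule filter_leI)
  have interior_apart: "Ph ` (disc m - bsphere m) \<inter> pts B = {}"
    using att unfolding attach_cell_def by blast
  fix P assume "eventually P (filtermap Ph (inf H (principal (bsphere m))))"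
  then have "eventually (\<lambda>x. x \<in> bsphere m \<longrightarrow> P (Ph x)) H"
    by (simp add: eventually_filtermap eventually_inf_principal)
  with H_disc have "eventually (\<lambda>x. Ph x \<in> pts B \<longrightarrow> P (Ph x)) H"
    by (rule eventually_elim2) (use interior_apart in blast)
  then have "eventually (\<lambda>y. y \<in> pts B \<longrightarrow> P y) U"
    using UH by (simp add: filter_leD eventually_filtermap)
  then show "eventually P U"
    using UB by (rule eventually_mp)
qed

lemma attach_cell_ultrafilter_through_disc:
  assumes att: "attach_cell B A m ph Ph" and U: "is_ultrafilter U"
    and UB: "eventually (\<lambda>z. z \<in> pts B) U"
    and H: "cv (Disc m) H d" and UH: "U \<le> filtermap Ph H"
  shows "cv B U (ph d)"
proof -
  from att have cont: "cont (Sphere m) B ph" and glue: "\<forall>s\<in>bsphere m. Ph s = ph s"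
    unfolding attach_cell_def by auto
  from H have H_disc: "H \<le> inf (nhds d) (principal (disc m))"
    by (simp add: Disc_def cv_top_of_set)
  have "U \<le> filtermap Ph (inf H (principal (bsphere m)))"
    using H_disc UB UH by (intro attach_cell_image_filter_on_sphere[OF att]) (simp_all add: le_principal)
  then obtain V where V: "V \<noteq> bot" "V \<le> inf H (principal (bsphere m))" "filtermap Ph V = U"
    by (rule ultrafilter_le_filtermap[OF U])
  have V_sphere: "V \<le> inf (nhds d) (principal (bsphere m))"
    using V(2) H_disc by (meson le_inf_iff order_trans)
  have "d \<in> bsphere m"
  proof (rule Lim_in_closed_set[OF closed_bsphere])
    show "eventually (\<lambda>x. x \<in> bsphere m) V" "((\<lambda>x. x) \<longlongrightarrow> d) V"
      using V_sphere by (simp_all add: le_principal filterlim_def filtermap_ident)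
  qed (fact V(1))
  with V(1) V_sphere have "cv (Sphere m) V d"
    by (simp add: Sphere_def cv_top_of_set)
  with cont have "cv B (filtermap ph V) (ph d)"
    unfolding cont_def by blast
  moreover have "filtermap ph V = filtermap Ph V"
  proof -
    have "eventually (\<lambda>x. ph x = Ph x) V"
      using V_sphere glue by (auto simp: le_principal elim: eventually_mono)
    then show ?thesis
      unfolding filter_eq_iff eventually_filtermap by (auto intro!: eventually_subst elim: eventually_mono)
  qed
  ultimately show ?thesis
    using V(3) by simp
qed

lemma attach_cell_preserves_nonconvergence:
  assumes att: "attach_cell B A m ph Ph" and U: "is_ultrafilter U" "U \<le> cofinite"
    and UB: "eventually (\<lambda>z. z \<in> pts B) U" and no_limit: "\<And>y. \<not> cv B U y"
  shows "\<not> cv A U x"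
proof
  assume cvA: "cv A U x"
  from att have "cv A = final_ps (pts A)
       (\<lambda>G y. (\<exists>x. cv B G x \<and> y = x) \<or>
              (\<exists>H d. cv (Disc m) H d \<and> y = Ph d \<and> G = filtermap Ph H))"
    by (simp add: attach_cell_def)
  from final_ps_free_ultrafilter[OF this cvA U] obtain G where
    G: "(\<exists>x'. cv B G x' \<and> x = x') \<or> (\<exists>H d. cv (Disc m) H d \<and> x = Ph d \<and> G = filtermap Ph H)"
    and "U \<le> G"
    by blast
  from G show False
  proof (elim disjE exE conjE)
    fix x' assume "cv B G x'"
    moreover have "pseudotop B"
      using att unfolding attach_cell_def by blast
    ultimately have "cv B U x'"
      using \<open>U \<le> G\<close> is_ultrafilter_neq_bot[OF U(1)] by (blast intro: pseudotop_cv_mono)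
    with no_limit show False
      by blast
  next
    fix H d assume "cv (Disc m) H d" "G = filtermap Ph H"
    with \<open>U \<le> G\<close> have "cv B U (ph d)"
      using attach_cell_ultrafilter_through_disc[OF att U(1) UB] by blast
    with no_limit show False
      by blast
  qed
qed

lemma is_succ_of_Least: "b < g \<Longrightarrow> is_succ_of (LEAST a. b < a) b"
  unfolding is_succ_of_def by (metis LeastI not_less_Least)

lemma is_succ_of_le: "is_succ_of a b \<Longrightarrow> b < c \<Longrightarrow> a \<le> c"
  unfolding is_succ_of_def by (meson not_le)

lemma wellorder_index_cases:
  fixes a :: "'i::wellorder"
  obtains "\<not> (\<exists>b. b < a)" | b where "is_succ_of a b" | "is_limit a"
  unfolding is_succ_of_def is_limit_def by blast

lemma le_cofinite_eventually_mem_diff: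
  assumes "F \<le> cofinite" and "eventually (\<lambda>z. z \<in> S) F" and "eventually (\<lambda>z. z \<in> A) F"
    and "A - B \<subseteq> K" and "finite (S \<inter> K)"
  shows "eventually (\<lambda>z. z \<in> B) F"
proof -
  have "eventually (\<lambda>z. z \<notin> S \<inter> K) cofinite"
    using \<open>finite (S \<inter> K)\<close> by (simp add: eventually_cofinite Int_def)
  with \<open>F \<le> cofinite\<close> have "eventually (\<lambda>z. z \<notin> S \<inter> K) F"
    by (rule filter_leD)
  with assms(2,3) have "eventually (\<lambda>z. z \<in> S \<and> z \<in> A \<and> z \<notin> S \<inter> K) F"
    by (simp add: eventually_conj_iff)
  then show ?thesis
    by (rule eventually_mono) (use \<open>A - B \<subseteq> K\<close> in blast)
qed

lemma infinite_transversal: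
  assumes infinite: "infinite {i \<in> I. C \<inter> A i \<noteq> {}}" and disjoint: "disjoint_family_on A I"
  obtains S where "S \<subseteq> C" "S \<subseteq> (\<Union>i\<in>I. A i)" "infinite S" "\<And>i. i \<in> I \<Longrightarrow> finite (S \<inter> A i)"
proof -
  define J where "J = {i \<in> I. C \<inter> A i \<noteq> {}}"
  define pick where "pick i = (SOME y. y \<in> C \<inter> A i)" for i
  have pick: "pick i \<in> C \<inter> A i" if "i \<in> J" for i
    unfolding pick_def by (rule someI_ex) (use that J_def in blast)
  have pick_unique: "j = i" if "j \<in> J" "i \<in> I" "pick j \<in> A i" for i j
  proof (rule ccontr)
    assume "j \<noteq> i"
    moreover have "j \<in> I"
      using \<open>j \<in> J\<close> J_def by simp
    ultimately have "A j \<inter> A i = {}"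
      using disjoint \<open>i \<in> I\<close> by (simp add: disjoint_family_onD)
    with pick[OF \<open>j \<in> J\<close>] \<open>pick j \<in> A i\<close> show False
      by blast
  qed
  have "inj_on pick J"
  proof (rule inj_onI)
    fix i j assume "i \<in> J" "j \<in> J" "pick i = pick j"
    then show "i = j"
      using pick[of j] pick_unique[of i j] J_def by simp
  qed
  then have "infinite (pick ` J)"
    using infinite unfolding J_def by (simp add: finite_image_iff)
  moreover have "finite (pick ` J \<inter> A i)" if "i \<in> I" for i
  proof (rule finite_subset)
    show "pick ` J \<inter> A i \<subseteq> {pick i}"
      using pick_unique that by blast
  qed simp
  moreover have "pick ` J \<subseteq> C" "pick ` J \<subseteq> (\<Union>i\<in>I. A i)"
    using pick J_def by auto
  ultimately show thesis
    using that by simp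
qed

locale cell_complex_sequence =
  fixes X Y :: "'a cspace" and g :: "'i::wellorder" and Ysp :: "'i \<Rightarrow> 'a cspace"
    and n :: "'i \<Rightarrow> nat" and phi Phi :: "'i \<Rightarrow> (nat \<Rightarrow> real) \<Rightarrow> 'a"
  assumes rel_cell_complex: "rel_cell_complex X Y g Ysp n phi Phi"
begin

abbreviation cell :: "'i \<Rightarrow> 'a set" where
  "cell b \<equiv> cell_interior (n b) (Phi b)"

lemma stage_initial: "a \<le> g \<Longrightarrow> \<not> (\<exists>b. b < a) \<Longrightarrow> Ysp a = X"
  using rel_cell_complex unfolding rel_cell_complex_def by blast

lemma stage_succ:
  "a \<le> g \<Longrightarrow> is_succ_of a b \<Longrightarrow> attach_cell (Ysp b) (Ysp a) (n b) (phi b) (Phi b)"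
  using rel_cell_complex unfolding rel_cell_complex_def by blast

lemma stage_limit:
  assumes "a \<le> g" "is_limit a"
  shows "pts (Ysp a) = (\<Union>b\<in>{..<a}. pts (Ysp b))"
    and "cv (Ysp a) = final_ps (pts (Ysp a)) (\<lambda>G y. \<exists>b<a. cv (Ysp b) G y)"
  using rel_cell_complex assms unfolding rel_cell_complex_def by blast+

lemma stage_attach:
  assumes "b < g"
  obtains a where "is_succ_of a b" "a \<le> g" "attach_cell (Ysp b) (Ysp a) (n b) (phi b) (Phi b)"
proof -
  have "is_succ_of (LEAST a. b < a) b" "(LEAST a. b < a) \<le> g"
    using assms by (simp_all add: is_succ_of_Least Least_le)
  with stage_succ that show thesis
    by blast
qed

lemma stage_pseudotop: "a \<le> g \<Longrightarrow> pseudotop (Ysp a)"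
proof (cases "a = g")
  case True
  then show ?thesis
    using rel_cell_complex unfolding rel_cell_complex_def by simp
next
  case False
  moreover assume "a \<le> g"
  ultimately obtain c where "attach_cell (Ysp a) (Ysp c) (n a) (phi a) (Phi a)"
    by (meson order.not_eq_order_implies_strict stage_attach)
  then show ?thesis
    unfolding attach_cell_def by blast
qed

lemma stage_pts_mono: "c \<le> a \<Longrightarrow> a \<le> g \<Longrightarrow> pts (Ysp c) \<subseteq> pts (Ysp a)"
proof (induction a arbitrary: c rule: less_induct)
  case (less a)
  show ?case
  proof (cases "c = a")
    case False
    with less.prems have "c < a"
      by simp
    consider "\<not> (\<exists>b. b < a)" | b where "is_succ_of a b" | "is_limit a"
      by (rule wellorder_index_cases)
    then show ?thesis
    proof cases
      case 1
      with \<open>c < a\<close> show ?thesis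
        by blast
    next
      case (2 b)
      then have "b < a" "c \<le> b"
        using \<open>c < a\<close> unfolding is_succ_of_def by (auto simp: not_less[symmetric])
      with less have "pts (Ysp c) \<subseteq> pts (Ysp b)"
        by simp
      also have "\<dots> \<subseteq> pts (Ysp a)"
        using stage_succ[OF less.prems(2) 2] unfolding attach_cell_def by blast
      finally show ?thesis .
    next
      case 3
      with less.prems \<open>c < a\<close> show ?thesis
        using stage_limit(1) by blast
    qed
  qed simp
qed

lemma base_subset_stage:
  assumes "a \<le> g"
  shows "pts X \<subseteq> pts (Ysp a)"
proof -
  define z :: 'i where "z = (LEAST b. True)"
  have "\<not> (\<exists>b. b < z)"
    unfolding z_def using not_less_Least by blast
  moreover have "z \<le> a"
    unfolding z_def by (rule Least_le) simp
  moreover from this have "z \<le> g"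
    using assms by (rule order_trans)
  ultimately have "Ysp z = X"
    by (simp add: stage_initial)
  with stage_pts_mono[OF \<open>z \<le> a\<close> assms] show ?thesis
    by simp
qed

lemma cell_disjoint_stage: "b < g \<Longrightarrow> cell b \<inter> pts (Ysp b) = {}"
  by (erule stage_attach) (auto simp: attach_cell_def cell_interior_def)

lemma cell_subset_stage: "b < a \<Longrightarrow> a \<le> g \<Longrightarrow> cell b \<subseteq> pts (Ysp a)"
proof -
  assume "b < a" "a \<le> g"
  then obtain c where "is_succ_of c b" "c \<le> g" "attach_cell (Ysp b) (Ysp c) (n b) (phi b) (Phi b)"
    by (meson order_less_le_trans stage_attach)
  moreover from this \<open>b < a\<close> have "c \<le> a"
    by (simp add: is_succ_of_le)
  ultimately show ?thesis
    using stage_pts_mono[OF _ \<open>a \<le> g\<close>] unfolding attach_cell_def cell_interior_def by blast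
qed

lemma cell_disjoint_base:
  assumes "b < g"
  shows "cell b \<inter> pts X = {}"
  using cell_disjoint_stage[OF assms] base_subset_stage[OF less_imp_le[OF assms]] by blast

lemma disjoint_family_cells: "disjoint_family_on cell {..<g}"
proof -
  have earlier_apart: "cell b \<inter> cell c = {}" if "b < c" "c < g" for b c
    using cell_subset_stage[OF that(1) less_imp_le[OF that(2)]] cell_disjoint_stage[OF that(2)] by blast
  show ?thesis
  proof (unfold disjoint_family_on_def, intro ballI impI)
    fix b c assume "b \<in> {..<g}" "c \<in> {..<g}" "b \<noteq> c"
    then show "cell b \<inter> cell c = {}"
      using earlier_apart[of b c] earlier_apart[of c b] by (auto simp: neq_iff)
  qed
qed

lemma limit_stage_preserves_nonconvergence:
  assumes "a \<le> g" and "is_limit a" and U: "is_ultrafilter U" "U \<le> cofinite"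
    and no_limit: "\<And>b y. b < a \<Longrightarrow> \<not> cv (Ysp b) U y"
  shows "\<not> cv (Ysp a) U x"
proof
  assume "cv (Ysp a) U x"
  from final_ps_free_ultrafilter[OF stage_limit(2)[OF assms(1,2)] this U]
  obtain b G where "b < a" "cv (Ysp b) G x" "U \<le> G"
    by blast
  moreover from this \<open>a \<le> g\<close> have "pseudotop (Ysp b)"
    by (simp add: stage_pseudotop)
  ultimately have "cv (Ysp b) U x"
    using is_ultrafilter_neq_bot[OF U(1)] by (blast intro: pseudotop_cv_mono)
  with no_limit \<open>b < a\<close> show False
    by blast
qed

lemma free_ultrafilter_not_convergent:
  assumes U: "is_ultrafilter U" "U \<le> cofinite" and US: "eventually (\<lambda>z. z \<in> S) U"
    and S_base: "S \<inter> pts X = {}" and S_cells: "\<And>b. b < g \<Longrightarrow> finite (S \<inter> cell b)"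
  shows "a \<le> g \<Longrightarrow> \<not> cv (Ysp a) U x"
proof (induction a arbitrary: x rule: less_induct)
  case (less a)
  have U_pts: "eventually (\<lambda>z. z \<in> pts (Ysp a)) U" if "cv (Ysp a) U x"
    using pseudotop_cv_eventually_pts[OF stage_pseudotop[OF less.prems] that] .
  consider "\<not> (\<exists>b. b < a)" | b where "is_succ_of a b" | "is_limit a"
    by (rule wellorder_index_cases)
  then show ?case
  proof cases
    case 1
    show ?thesis
    proof
      assume "cv (Ysp a) U x"
      with U_pts have "eventually (\<lambda>z. z \<in> pts X) U"
        using stage_initial[OF less.prems 1] by simp
      with US have "eventually (\<lambda>z. z \<in> S \<inter> pts X) U"
        by (simp add: eventually_conj_iff)
      with S_base is_ultrafilter_neq_bot[OF U(1)] show False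
        by simp
    qed
  next
    case (2 b)
    then have "b < a" "b < g"
      using less.prems unfolding is_succ_of_def by auto
    note attach = stage_succ[OF less.prems 2]
    show ?thesis
    proof
      assume "cv (Ysp a) U x"
      then have "eventually (\<lambda>z. z \<in> pts (Ysp b)) U"
        by (rule le_cofinite_eventually_mem_diff[OF U(2) US U_pts attach_cell_new_points[OF attach]
              S_cells[OF \<open>b < g\<close>]])
      moreover have "\<not> cv (Ysp b) U y" for y
        using less.IH[OF \<open>b < a\<close> less_imp_le[OF \<open>b < g\<close>]] .
      ultimately have "\<not> cv (Ysp a) U x"
        by (rule attach_cell_preserves_nonconvergence[OF attach U])
      with \<open>cv (Ysp a) U x\<close> show False
        by contradiction
    qed
  next
    case 3
    have "\<not> cv (Ysp b) U y" if "b < a" for b y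
      using less.IH[OF that less_imp_le[OF order_less_le_trans[OF that less.prems]]] .
    then show ?thesis
      by (rule limit_stage_preserves_nonconvergence[OF less.prems 3 U])
  qed
qed

end

theorem mainTheorem8:
  fixes X Y :: "'a cspace" and g :: "'i::wellorder" and Ysp :: "'i \<Rightarrow> 'a cspace"
    and n :: "'i \<Rightarrow> nat" and phi Phi :: "'i \<Rightarrow> (nat \<Rightarrow> real) \<Rightarrow> 'a" and C :: "'a set"
  assumes "rel_cell_complex X Y g Ysp n phi Phi"
    and "compact_sub Y C"
  shows "finite {b. b < g \<and> C \<inter> cell_interior (n b) (Phi b) \<noteq> {}}"
proof (rule ccontr)
  interpret cell_complex_sequence X Y g Ysp n phi Phi
    by unfold_locales (fact assms(1))
  assume "infinite {b. b < g \<and> C \<inter> cell b \<noteq> {}}"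
  then have "infinite {b \<in> {..<g}. C \<inter> cell b \<noteq> {}}"
    by simp
  then obtain S where S: "S \<subseteq> C" "S \<subseteq> (\<Union>b<g. cell b)" "infinite S"
    and S_cells: "\<And>b. b \<in> {..<g} \<Longrightarrow> finite (S \<inter> cell b)"
    using infinite_transversal[OF _ disjoint_family_cells] by blast
  from \<open>infinite S\<close> obtain U where U: "is_ultrafilter U" "U \<le> cofinite" and US: "eventually (\<lambda>z. z \<in> S) U"
    by (rule free_ultrafilter_exists)
  have "S \<inter> pts X = {}"
    using S(2) cell_disjoint_base by blast
  have "eventually (\<lambda>z. z \<in> C) U"
    using US S(1) by (auto elim: eventually_mono)
  with assms(2) U(1) obtain x where "cv Y U x"
    unfolding compact_sub_def by blast
  moreover have "Ysp g = Y"
    using rel_cell_complex unfolding rel_cell_complex_def by blast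
  moreover have "\<not> cv (Ysp g) U x"
    by (rule free_ultrafilter_not_convergent[OF U US \<open>S \<inter> pts X = {}\<close>]) (use S_cells in auto)
  ultimately show False
    by simp
qed

end
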